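(* Assume $d(\eta,\cdot)$ attains its minimum over $\mathcal G$ at $g^*$ (equivalently, by the results on the BF dual, the BF prediction for $b=b^*$, $\epsilon=\vec 0_m$, which is then $g^*$). Then for every $g^{ds}$ in the closure $\mathcal G_{ds}$ of $\mathcal G^\circ_{ds}$ in $\Delta_k^n$, $d(\eta,g^* )\le d(\eta,g^{ds})$.
   Context: Standard setup. Let $n\ge1$, $k\ge2$, $p\ge1$ be integers and $m=p+k$. There are $n$ data points $x_1,\dots,x_n$ and $p$ rules $h^{(1)},\dots,h^{(p)}$, each a map from $\{x_1,\dots,x_n\}$ to $\{1,\dots,k\}\cup\{?\}$, where "?" means abstain. Let $n_j\ge1$ be the number of indices $i$ with $h^{(j)}(x_i)\neq ?$. $\Delta_k$ denotes the probability simplex in $\mathbb{R}^k$; an element $z\in\Delta_k^n\subset\mathbb{R}^{nk}$ is written $z=(z_1,\dots,z_n)$ with $z_i=(z_{i1},\dots,z_{ik})\in\Delta_k$. For $j\le p$ let $h^{(j)}\in\{0,1\}^{nk}$ also denote the vector with $h^{(j)}_{i\ell}=1$ iff $h^{(j)}(x_i)=\ell$; for $\ell\le k$ let $\vec e^{\,n}_\ell\in\{0,1\}^{nk}$ have entries $(\vec e^{\,n}_\ell)_{i\ell'}=\mathbf 1(\ell'=\ell)$. The matrix $A\in\mathbb{R}^{m\times nk}$ has rows $a^{(j)}=h^{(j)}/n_j$ for $1\le j\le p$ and $a^{(p+\ell)}=\vec e^{\,n}_\ell/n$ for $1\le\ell\le k$. For $\theta\in\mathbb{R}^m$ put $a^{(\theta)}=A^\top\theta\in\mathbb{R}^{nk}$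 (entries $a^{(\theta)}_{i\ell}$) and define $g^{(\theta)}\in\Delta_k^n$ by $g^{(\theta)}_{i\ell}=\exp(a^{(\theta)}_{i\ell})/\sum_{\ell'=1}^k\exp(a^{(\theta)}_{i\ell'})$; let $\mathcal G=\{g^{(\theta)}:\theta\in\mathbb{R}^m\}$. A fixed "true labeling" $\eta\in\Delta_k^n$ is given and $b^*:=A\eta\in\mathbb{R}^m$. For $\mu,\nu\in\Delta_k^n$, $d(\mu,\nu)=\sum_{i=1}^n\mathrm{KL}(\mu_i\|\nu_i)=\sum_{i,\ell}\mu_{i\ell}\log(\mu_{i\ell}/\nu_{i\ell})$, with $0\log(0/x)=0$. One-coin Dawid–Skene (OCDS) prediction: for class frequencies $w\in\Delta_k$ and rule accuracies $b\in(0,1)^p$, $g^{ds}(w,b)\in\Delta_k^n$ is defined by $g^{ds}(w,b)_{i\ell}=\widehat g_{i\ell}/\sum_{\ell'}\widehat g_{i\ell'}$ where $\widehat g_{i\ell}=w_\ell\prod_{j:\,h^{(j)}(x_i)=\ell}b_j\prod_{j:\,h^{(j)}(x_i)\notin\{\ell,?\}}\frac{1-b_j}{k-1}$. $\mathcal G^\circ_{ds}=\{g^{ds}(w,b):\ w\in\Delta_k,\ 0<w_\ell<1\ \forall\ell,\ b\in(0,1)^p\}$. *)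

theory Defs
  imports "HOL-Analysis.Analysis"
begin

text \<open>Data points are indexed by a finite type 'n (n = CARD('n)), classes by a finite
type 'k (k = CARD('k)), rules by a finite type 'p (p = CARD('p)).  A rule system is
h :: 'p => 'n => 'k option, where None means abstain.  Elements of (R^k)^n are
real^'k^'n; parameters theta in R^m, m = p + k, are real^('p + 'k), with Inl j the
rule coordinates and Inr l the class coordinates.\<close>

definition simplex_k :: "real^'k \<Rightarrow> bool" where
  "simplex_k v \<longleftrightarrow> (\<forall>l. 0 \<le> v $ l) \<and> (\<Sum>l\<in>UNIV. v $ l) = 1"

definition DeltaN :: "(real^'k^'n) set" where
  "DeltaN = {z. \<forall>i. simplex_k (z $ i)}"

definition n_rule :: "('p \<Rightarrow> 'n::finite \<Rightarrow> 'k option) \<Rightarrow> 'p \<Rightarrow> nat" where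
  "n_rule h j = card {i. h j i \<noteq> None}"

definition a_theta :: "('p::finite \<Rightarrow> 'n::finite \<Rightarrow> 'k::finite option) \<Rightarrow> real^('p + 'k) \<Rightarrow> real^'k^'n" where
  "a_theta h \<theta> = (\<chi> i l. (\<Sum>j\<in>UNIV. \<theta> $ Inl j * (if h j i = Some l then 1 else 0) / real (n_rule h j))
                     + \<theta> $ Inr l / real CARD('n))"

definition g_theta :: "('p::finite \<Rightarrow> 'n::finite \<Rightarrow> 'k::finite option) \<Rightarrow> real^('p + 'k) \<Rightarrow> real^'k^'n" where
  "g_theta h \<theta> = (\<chi> i l. exp (a_theta h \<theta> $ i $ l) / (\<Sum>l'\<in>UNIV. exp (a_theta h \<theta> $ i $ l')))"

definition G_fam :: "('p::finite \<Rightarrow> 'n::finite \<Rightarrow> 'k::finite option) \<Rightarrow> (real^'k^'n) set" where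
  "G_fam h = range (g_theta h)"

definition dKL :: "real^'k::finite^'n::finite \<Rightarrow> real^'k^'n \<Rightarrow> ereal" where
  "dKL \<mu> \<nu> = (if \<exists>i l. \<mu> $ i $ l > 0 \<and> \<nu> $ i $ l = 0 then \<infinity>
     else ereal (\<Sum>i\<in>UNIV. \<Sum>l\<in>UNIV. if \<mu> $ i $ l = 0 then 0
                      else \<mu> $ i $ l * ln (\<mu> $ i $ l / \<nu> $ i $ l)))"

definition g_hat_ds :: "('p::finite \<Rightarrow> 'n::finite \<Rightarrow> 'k::finite option) \<Rightarrow> real^'k \<Rightarrow> real^'p \<Rightarrow> real^'k^'n" where
  "g_hat_ds h w b = (\<chi> i l. w $ l * (\<Prod>j\<in>{j. h j i = Some l}. b $ j)
       * (\<Prod>j\<in>{j. h j i \<noteq> Some l \<and> h j i \<noteq> None}. (1 - b $ j) / (real CARD('k) - 1)))"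

definition g_ds :: "('p::finite \<Rightarrow> 'n::finite \<Rightarrow> 'k::finite option) \<Rightarrow> real^'k \<Rightarrow> real^'p \<Rightarrow> real^'k^'n" where
  "g_ds h w b = (\<chi> i l. g_hat_ds h w b $ i $ l / (\<Sum>l'\<in>UNIV. g_hat_ds h w b $ i $ l'))"

definition G_ds_open :: "('p::finite \<Rightarrow> 'n::finite \<Rightarrow> 'k::finite option) \<Rightarrow> (real^'k^'n) set" where
  "G_ds_open h = {g_ds h w b | w b. simplex_k w \<and> (\<forall>l. 0 < w $ l \<and> w $ l < 1)
                                   \<and> (\<forall>j. 0 < b $ j \<and> b $ j < 1)}"

definition G_ds :: "('p::finite \<Rightarrow> 'n::finite \<Rightarrow> 'k::finite option) \<Rightarrow> (real^'k^'n) set" where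
  "G_ds h = closure (G_ds_open h) \<inter> DeltaN"

end

theory Submission
  imports Defs
begin

text \<open>Every OCDS prediction with interior parameters is itself a member of G: the
unnormalised OCDS score of class l at x_i is, up to a factor depending only on i, the
product of w_l and of the odds ratios b_j (k-1)/(1-b_j) of the rules voting l, i.e. the
exponential of a^(theta) for a suitable theta.  Hence the closure of the OCDS family lies
in the closure of G, and the minimality of g* over G passes to that closure because
d(eta, -) is lower semicontinuous.\<close>

lemma a_theta_nth:
  fixes h :: "'p::finite \<Rightarrow> 'n::finite \<Rightarrow> 'k::finite option"
  shows "a_theta h \<theta> $ i $ l =
     (\<Sum>j\<in>{j. h j i = Some l}. \<theta> $ Inl j / real (n_rule h j)) + \<theta> $ Inr l / real CARD('n)"
proof -
  have "\<theta> $ Inl j * (if h j i = Some l then 1 else 0) / real (n_rule h j)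
      = (if h j i = Some l then \<theta> $ Inl j / real (n_rule h j) else 0)" for j
    by simp
  then show ?thesis
    unfolding a_theta_def by (simp add: sum.If_cases)
qed

lemma g_ds_in_G_fam:
  fixes h :: "'p::finite \<Rightarrow> 'n::finite \<Rightarrow> 'k::finite option"
  assumes k2: "CARD('k) \<ge> 2"
    and w: "\<forall>l. 0 < w $ l" and b: "\<forall>j. 0 < b $ j \<and> b $ j < 1"
  shows "g_ds h w b \<in> G_fam h"
proof -
  define q where "q j = (1 - b $ j) / (real CARD('k) - 1)" for j
  have q_pos: "q j > 0" for j
    using b k2 unfolding q_def by auto
  define \<theta> :: "real^('p + 'k)" where
    "\<theta> = (\<chi> x. case x of Inl j \<Rightarrow> real (n_rule h j) * ln (b $ j / q j)
                       | Inr l \<Rightarrow> real CARD('n) * ln (w $ l))"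
  have n_rule_pos: "h j i = Some l \<Longrightarrow> real (n_rule h j) > 0" for i j l
    unfolding n_rule_def by (auto simp: card_gt_0_iff)
  have exp_a: "exp (a_theta h \<theta> $ i $ l) = w $ l * (\<Prod>j\<in>{j. h j i = Some l}. b $ j / q j)" for i l
  proof -
    have "a_theta h \<theta> $ i $ l = (\<Sum>j\<in>{j. h j i = Some l}. ln (b $ j / q j)) + ln (w $ l)"
      unfolding a_theta_nth by (auto simp: \<theta>_def dest: n_rule_pos intro!: sum.cong)
    then show ?thesis
      using w b q_pos by (simp add: exp_add exp_sum)
  qed
  define Q where "Q i = (\<Prod>j\<in>{j. h j i \<noteq> None}. q j)" for i
  have Q_pos: "Q i > 0" for i
    unfolding Q_def using q_pos by (simp add: prod_pos)
  have g_hat: "g_hat_ds h w b $ i $ l = exp (a_theta h \<theta> $ i $ l) * Q i" for i l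
  proof -
    have votes: "{j. h j i \<noteq> None} = {j. h j i = Some l} \<union> {j. h j i \<noteq> Some l \<and> h j i \<noteq> None}"
      by auto
    have "Q i = (\<Prod>j\<in>{j. h j i = Some l}. q j) * (\<Prod>j\<in>{j. h j i \<noteq> Some l \<and> h j i \<noteq> None}. q j)"
      unfolding Q_def votes by (subst prod.union_disjoint) auto
    moreover have "(\<Prod>j\<in>{j. h j i = Some l}. b $ j)
        = (\<Prod>j\<in>{j. h j i = Some l}. b $ j / q j) * (\<Prod>j\<in>{j. h j i = Some l}. q j)"
      unfolding prod.distrib[symmetric] using q_pos by (intro prod.cong) (auto simp: less_imp_neq[symmetric])
    ultimately show ?thesis
      unfolding g_hat_ds_def exp_a by (simp add: q_def mult_ac)
  qed
  have "g_ds h w b = g_theta h \<theta>"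
    unfolding g_ds_def g_theta_def
    by (simp add: vec_eq_iff g_hat sum_distrib_right[symmetric] Q_pos[THEN less_imp_neq, symmetric])
  then show ?thesis
    unfolding G_fam_def by blast
qed

lemma G_ds_subset_closure_G_fam:
  assumes "CARD('k) \<ge> 2"
  shows "G_ds (h :: 'p::finite \<Rightarrow> 'n::finite \<Rightarrow> 'k::finite option) \<subseteq> closure (G_fam h)"
proof -
  have "G_ds_open h \<subseteq> G_fam h"
    using g_ds_in_G_fam[OF assms] unfolding G_ds_open_def by blast
  then show ?thesis
    unfolding G_ds_def by (meson closure_mono inf.coboundedI1)
qed

definition kl_sum :: "real^'k::finite^'n::finite \<Rightarrow> real^'k^'n \<Rightarrow> real" where
  "kl_sum \<mu> \<nu> = (\<Sum>i\<in>UNIV. \<Sum>l\<in>UNIV. if \<mu> $ i $ l = 0 then 0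
                      else \<mu> $ i $ l * ln (\<mu> $ i $ l / \<nu> $ i $ l))"

lemma dKL_eq_kl_sum:
  "\<not> (\<exists>i l. \<mu> $ i $ l > 0 \<and> \<nu> $ i $ l = 0) \<Longrightarrow> dKL \<mu> \<nu> = ereal (kl_sum \<mu> \<nu>)"
  unfolding dKL_def kl_sum_def by simp

lemma tendsto_kl_sum:
  assumes lim: "(f \<longlongrightarrow> \<nu>) F" and supp: "\<And>i l. \<mu> $ i $ l \<noteq> 0 \<Longrightarrow> \<nu> $ i $ l \<noteq> 0"
  shows "((\<lambda>x. kl_sum \<mu> (f x)) \<longlongrightarrow> kl_sum \<mu> \<nu>) F"
  unfolding kl_sum_def
proof (intro tendsto_intros)
  fix i l
  have "((\<lambda>x. f x $ i $ l) \<longlongrightarrow> \<nu> $ i $ l) F"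
    by (intro tendsto_vec_nth lim)
  then show "((\<lambda>x. if \<mu> $ i $ l = 0 then 0 else \<mu> $ i $ l * ln (\<mu> $ i $ l / f x $ i $ l))
      \<longlongrightarrow> (if \<mu> $ i $ l = 0 then 0 else \<mu> $ i $ l * ln (\<mu> $ i $ l / \<nu> $ i $ l))) F"
    using supp[of i l] by (cases "\<mu> $ i $ l = 0") (auto intro!: tendsto_intros)
qed

lemma dKL_lower_bound_closure:
  assumes \<mu>_nonneg: "\<And>i l. 0 \<le> \<mu> $ i $ l"
    and bound: "\<And>g. g \<in> S \<Longrightarrow> c \<le> dKL \<mu> g" and \<nu>: "\<nu> \<in> closure S"
  shows "c \<le> dKL \<mu> \<nu>"
proof (cases "\<exists>i l. \<mu> $ i $ l > 0 \<and> \<nu> $ i $ l = 0")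
  case True
  then show ?thesis unfolding dKL_def by simp
next
  case False
  then have supp: "\<mu> $ i $ l \<noteq> 0 \<Longrightarrow> \<nu> $ i $ l \<noteq> 0" for i l
    using \<mu>_nonneg[of i l] by force
  obtain s where s: "\<And>m. s m \<in> S" and lim: "s \<longlonglongrightarrow> \<nu>"
    using \<nu> unfolding closure_sequential by blast
  have "eventually (\<lambda>m. s m $ i $ l \<noteq> 0) sequentially" if "\<mu> $ i $ l \<noteq> 0" for i l
    using tendsto_imp_eventually_ne[OF tendsto_vec_nth[OF tendsto_vec_nth[OF lim]] supp[OF that]] .
  then have "eventually (\<lambda>m. \<forall>i l. \<mu> $ i $ l \<noteq> 0 \<longrightarrow> s m $ i $ l \<noteq> 0) sequentially"
    by (auto simp: eventually_all_finite)
  then have "eventually (\<lambda>m. c \<le> ereal (kl_sum \<mu> (s m))) sequentially"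
    by (rule eventually_mono) (metis bound s dKL_eq_kl_sum less_irrefl)
  moreover have "(\<lambda>m. ereal (kl_sum \<mu> (s m))) \<longlonglongrightarrow> ereal (kl_sum \<mu> \<nu>)"
    using tendsto_kl_sum[OF lim supp] by (rule tendsto_ereal)
  ultimately have "c \<le> ereal (kl_sum \<mu> \<nu>)"
    by (intro tendsto_lowerbound) auto
  then show ?thesis
    by (simp add: dKL_eq_kl_sum[OF False])
qed

theorem mainTheorem16:
  fixes h :: "'p::finite \<Rightarrow> 'n::finite \<Rightarrow> 'k::finite option"
    and \<eta> gstar gds :: "real^'k^'n"
  assumes "CARD('k) \<ge> 2"
    and "\<forall>j. n_rule h j \<ge> 1"
    and "\<eta> \<in> DeltaN"
    and "gstar \<in> G_fam h"
    and "\<forall>g\<in>G_fam h. dKL \<eta> gstar \<le> dKL \<eta> g"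
    and "gds \<in> G_ds h"
  shows "dKL \<eta> gstar \<le> dKL \<eta> gds"
proof (rule dKL_lower_bound_closure)
  show "0 \<le> \<eta> $ i $ l" for i l
    using assms(3) unfolding DeltaN_def simplex_k_def by auto
  show "gds \<in> closure (G_fam h)"
    using G_ds_subset_closure_G_fam[OF assms(1)] assms(6) by blast
qed (use assms(5) in blast)

end
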